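(* Let $n\ge2$, $y\in\mathbb C$, and let $Y\subset\mathbb C^2$ be the span of $(1,y)^\top$. Let $A_Y$ be the operator on $H^{-1}(T)$ with $D(A_Y)=\{u\in H^1(0,1):\mu_n(u)=y\mu_0(u)\}$ and $A_Yu=\mathrm{Id}_m^{-1}(-u''+\gamma(u)(1-x)^{n-2})-c(u)\delta_1$, where $c(u)=-u(1)-(u(0)-u(1))\overline y$. Then $D(A_Y^2)=\{u\in H^3(0,1):\ \mu_n(u)=y\mu_0(u),\ \mu_n(u''-\gamma(u)(1-x)^{n-2})=y\,\mu_0(u''-\gamma(u)(1-x)^{n-2}),\ \mu_0(u''-\gamma(u)(1-x)^{n-2})=(u(1)-u(0))\overline y-u(1)\}$, and $A_Yu=-u''+\gamma(u)(1-x)^{n-2}$ for all $u\in D(A_Y^2)$.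
   Context: $H^1(T):=\{u\in H^1(0,1):u(0)=u(1)\}$, $H^{-1}(T)$ its (anti)dual with pivot $L^2(0,1)$; $\delta_1\in H^{-1}(T)$ is $v\mapsto v(1)$. For $k\in\mathbb N_0$, $\mu_k(f):=\int_0^1(1-x)^kf\,dx$ ($f\in L^1$), $\mu_0(f):=\langle f,1\rangle$ on $H^{-1}(T)$. $\gamma(f):=(n-1)(2n-1)f(0)-(n-1)^2(2n-1)\mu_{n-2}(f)$ for $f\in H^1(0,1)$. For $g\in H^{-1}(0,1)$, $\mathrm{Id}_m^{-1}g$ is the unique $w\in H^{-1}(T)$ with $\mu_0(w)=0$ whose restriction to $H^1_0(0,1)$ is $g$. $D(A_Y^2):=\{u\in D(A_Y):A_Yu\in D(A_Y)\}$. *)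

theory Defs
  imports "HOL-Analysis.Analysis"
begin

type_synonym fn = "real \<Rightarrow> complex"
type_synonym functional = "fn \<Rightarrow> complex"

definition L2 :: "fn \<Rightarrow> bool" where
  "L2 g \<longleftrightarrow> set_borel_measurable lborel {0..1} g \<and>
     set_integrable lborel {0..1} (\<lambda>x. (cmod (g x))^2)"

text \<open>g is a weak derivative of u on (0,1) (u taken as its continuous representative).\<close>
definition is_wderiv :: "fn \<Rightarrow> fn \<Rightarrow> bool" where
  "is_wderiv u g \<longleftrightarrow> L2 g \<and>
     (\<forall>x\<in>{0..1}. u x = u 0 + (LINT t:{0..x}|lborel. g t))"

definition H1 :: "fn set" where
  "H1 = {u. \<exists>g. is_wderiv u g}"

definition H1T :: "fn set" where
  "H1T = {u \<in> H1. u 0 = u 1}"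

definition H10 :: "fn set" where
  "H10 = {u \<in> H1. u 0 = 0 \<and> u 1 = 0}"

definition H3 :: "fn set" where
  "H3 = {u. \<exists>u1 u2. is_wderiv u u1 \<and> is_wderiv u1 u2 \<and> u2 \<in> H1}"

definition wd :: "fn \<Rightarrow> fn" where
  "wd u = (SOME g. is_wderiv u g)"

definition H1norm :: "fn \<Rightarrow> real" where
  "H1norm v = sqrt (LINT x:{0..1}|lborel. (cmod (v x))^2 + (cmod (wd v x))^2)"

text \<open>H^{-1}(T): bounded linear functionals on H^1(T) (extensional: 0 outside H^1(T)),
  with the L^2 pivot realised by the bilinear pairing.\<close>
definition Hm1T :: "functional set" where
  "Hm1T = {F. (\<forall>v. v \<notin> H1T \<longrightarrow> F v = 0) \<and>
     (\<forall>v\<in>H1T. \<forall>w\<in>H1T. \<forall>a b. F (\<lambda>x. a * v x + b * w x) = a * F v + b * F w) \<and>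
     (\<exists>C. \<forall>v\<in>H1T. cmod (F v) \<le> C * H1norm v)}"

definition emb :: "fn \<Rightarrow> functional" where
  "emb f = (\<lambda>v. LINT x:{0..1}|lborel. f x * v x)"

definition delta1 :: functional where
  "delta1 = (\<lambda>v. v 1)"

definition mu :: "nat \<Rightarrow> fn \<Rightarrow> complex" where
  "mu k f = (LINT x:{0..1}|lborel. of_real ((1 - x) ^ k) * f x)"

definition mu0H :: "functional \<Rightarrow> complex" where
  "mu0H F = F (\<lambda>_. 1)"

definition gamma :: "nat \<Rightarrow> fn \<Rightarrow> complex" where
  "gamma n f = of_nat ((n - 1) * (2 * n - 1)) * f 0
     - of_nat ((n - 1)^2 * (2 * n - 1)) * mu (n - 2) f"

text \<open>Id_m^{-1} g for g in H^{-1}(0,1) (given as a functional on H^1_0(0,1)).\<close>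
definition Idm_inv :: "functional \<Rightarrow> functional" where
  "Idm_inv g = (THE w. w \<in> Hm1T \<and> mu0H w = 0 \<and> (\<forall>\<phi>\<in>H10. w \<phi> = g \<phi>))"

text \<open>The element -u'' + gamma(u)(1-x)^(n-2) of H^{-1}(0,1), for u in H^1(0,1):
  \<langle>-u'',\<phi>\<rangle> = \<integral> u' \<phi>' for \<phi> in H^1_0.\<close>
definition gU :: "nat \<Rightarrow> fn \<Rightarrow> functional" where
  "gU n u = (\<lambda>\<phi>. (LINT x:{0..1}|lborel. wd u x * wd \<phi> x)
      + gamma n u * (LINT x:{0..1}|lborel. of_real ((1 - x) ^ (n - 2)) * \<phi> x))"

definition cY :: "complex \<Rightarrow> fn \<Rightarrow> complex" where
  "cY y u = - u 1 - (u 0 - u 1) * cnj y"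

definition D_AY :: "nat \<Rightarrow> complex \<Rightarrow> fn set" where
  "D_AY n y = {u \<in> H1. mu n u = y * mu 0 u}"

definition A_Y :: "nat \<Rightarrow> complex \<Rightarrow> fn \<Rightarrow> functional" where
  "A_Y n y u = (\<lambda>v. Idm_inv (gU n u) v - cY y u * delta1 v)"

definition D_AY2 :: "nat \<Rightarrow> complex \<Rightarrow> fn set" where
  "D_AY2 n y = {u \<in> D_AY n y. \<exists>w \<in> D_AY n y. \<forall>v \<in> H1T. A_Y n y u v = emb w v}"

end

theory Submission
  imports Defs
begin

text \<open>
  For \<open>u \<in> H\<^sup>1\<close> the functional \<open>Id\<^sub>m\<^sup>-\<^sup>1(-u'' + \<gamma>(u)(1-x)\<^sup>n\<^sup>-\<^sup>2)\<close> is
  \<open>v \<mapsto> g(v - v(0))\<close>, where \<open>g(\<phi>) = \<integral> u'\<phi>' + \<gamma>(u) \<integral> (1-x)\<^sup>n\<^sup>-\<^sup>2 \<phi>\<close>: shifting by \<open>v(0)\<close>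
  maps \<open>H\<^sup>1(T)\<close> into \<open>H\<^sup>1\<^sub>0\<close> and kills the constants, as \<open>\<mu>\<^sub>0 = 0\<close> demands.

  If \<open>A\<^sub>Y u\<close> is represented by some \<open>w \<in> D(A\<^sub>Y)\<close>, testing with \<open>\<phi> \<in> H\<^sup>1\<^sub>0\<close> shows that
  \<open>u' - Q\<close>, with \<open>Q\<close> a primitive of \<open>q = \<gamma>(u)(1-x)\<^sup>n\<^sup>-\<^sup>2 - w\<close>, is orthogonal to all
  derivatives of \<open>H\<^sup>1\<^sub>0\<close> functions; by the du Bois-Reymond lemma it is constant, so
  \<open>u'' = q \<in> H\<^sup>1\<close>. The moment conditions on \<open>u'' - \<gamma>(u)(1-x)\<^sup>n\<^sup>-\<^sup>2 = -w\<close> are those of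
  \<open>w \<in> D(A\<^sub>Y)\<close>, and testing with the constant \<open>1\<close> yields the condition on its mean.
  Conversely, for \<open>u \<in> H\<^sup>3\<close> integration by parts gives
  \<open>A\<^sub>Y u v = \<integral> f v - (\<integral> f + c(u)) v(1)\<close> with \<open>f = -u'' + \<gamma>(u)(1-x)\<^sup>n\<^sup>-\<^sup>2\<close>, and the
  mean condition is exactly \<open>\<integral> f + c(u) = 0\<close>.
\<close>

section \<open>Square integrable functions on [0,1]\<close>

abbreviation M01 :: "real measure" where
  "M01 \<equiv> restrict_space lborel {0..1}"

lemma set_borel_measurable_iff_restrict_space:
  fixes f :: "real \<Rightarrow> 'a::real_normed_vector"
  assumes "S \<in> sets lborel"
  shows "set_borel_measurable lborel S f \<longleftrightarrow> f \<in> borel_measurable (restrict_space lborel S)"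
  using assms by (simp add: set_borel_measurable_def borel_measurable_restrict_space_iff)

lemma L2_iff:
  "L2 g \<longleftrightarrow> g \<in> borel_measurable M01 \<and> integrable M01 (\<lambda>x. (cmod (g x))^2)"
  by (simp add: L2_def set_borel_measurable_iff_restrict_space set_integrable_eq)

lemma finite_measure_M01: "finite_measure M01"
  by (rule finite_measureI) (simp add: emeasure_restrict_space)

lemma L2_integrable:
  assumes "L2 g" shows "set_integrable lborel {0..1} g"
proof -
  have g: "g \<in> borel_measurable M01" and "integrable M01 (\<lambda>x. (cmod (g x))^2)"
    using assms by (auto simp: L2_iff)
  then have "integrable M01 (\<lambda>x. g x ^ 2)"
    by (subst integrable_norm_iff[symmetric]) (auto simp: norm_power)
  then have "integrable M01 g"
    by (rule finite_measure.square_integrable_imp_integrable[OF finite_measure_M01 g])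
  then show ?thesis by (simp add: set_integrable_eq)
qed

lemma mult_le_sum_squares:
  assumes "0 \<le> (p::real)" "0 \<le> q" shows "p * q \<le> p^2 + q^2"
proof -
  have "0 \<le> p * q" using assms by simp
  then show ?thesis using sum_squares_bound[of p q] by linarith
qed

lemma L2_mult_integrable:
  assumes "L2 f" "L2 g" shows "set_integrable lborel {0..1} (\<lambda>x. f x * g x)"
proof -
  have f: "f \<in> borel_measurable M01" and g: "g \<in> borel_measurable M01"
    and bound: "integrable M01 (\<lambda>x. (cmod (f x))^2 + (cmod (g x))^2)"
    using assms by (auto simp: L2_iff)
  have "integrable M01 (\<lambda>x. f x * g x)"
  proof (rule Bochner_Integration.integrable_bound[OF bound])
    show "(\<lambda>x. f x * g x) \<in> borel_measurable M01"
      using f g by (rule borel_measurable_times)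
    show "AE x in M01. norm (f x * g x) \<le> norm ((cmod (f x))^2 + (cmod (g x))^2)"
      by (intro AE_I2) (simp add: norm_mult mult_le_sum_squares)
  qed
  then show ?thesis by (simp add: set_integrable_eq)
qed

lemma continuous_on_L2: assumes "continuous_on {0..1} f" shows "L2 f"
proof -
  have "continuous_on {0..1} (\<lambda>x. (cmod (f x))^2)"
    by (intro continuous_intros assms)
  then show ?thesis
    using set_measurable_continuous_on[OF _ assms] borel_integrable_atLeastAtMost'
    by (simp add: L2_def set_borel_measurable_def)
qed

lemma square_sum_le: "((p::real) + q)^2 \<le> 2 * p^2 + 2 * q^2"
proof -
  have "0 \<le> (p - q)^2" by simp
  then show ?thesis by (simp add: power2_eq_square algebra_simps)
qed

lemma L2_lin:
  assumes "L2 f" "L2 g" shows "L2 (\<lambda>x. a * f x + b * g x)"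
proof -
  have f: "f \<in> borel_measurable M01" and g: "g \<in> borel_measurable M01"
    and bound: "integrable M01 (\<lambda>x. 2 * (cmod a)^2 * (cmod (f x))^2 + 2 * (cmod b)^2 * (cmod (g x))^2)"
    using assms by (auto simp: L2_iff)
  have "integrable M01 (\<lambda>x. (cmod (a * f x + b * g x))^2)"
  proof (rule Bochner_Integration.integrable_bound[OF bound])
    have "(cmod (a * f x + b * g x))^2
        \<le> 2 * (cmod a)^2 * (cmod (f x))^2 + 2 * (cmod b)^2 * (cmod (g x))^2" for x
    proof -
      have "(cmod (a * f x + b * g x))^2 \<le> (cmod a * cmod (f x) + cmod b * cmod (g x))^2"
        by (intro power_mono) (auto simp: norm_mult intro: norm_triangle_le)
      also have "\<dots> \<le> 2 * (cmod a * cmod (f x))^2 + 2 * (cmod b * cmod (g x))^2"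
        by (rule square_sum_le)
      finally show ?thesis by (simp add: power_mult_distrib)
    qed
    then show "AE x in M01. norm ((cmod (a * f x + b * g x))^2)
        \<le> norm (2 * (cmod a)^2 * (cmod (f x))^2 + 2 * (cmod b)^2 * (cmod (g x))^2)"
      by (intro AE_I2) simp
    show "(\<lambda>x. (cmod (a * f x + b * g x))^2) \<in> borel_measurable M01"
      using f g by measurable
  qed
  moreover have "(\<lambda>x. a * f x + b * g x) \<in> borel_measurable M01"
    using f g by measurable
  ultimately show ?thesis by (simp add: L2_iff)
qed

lemma L2_cnj: assumes "L2 f" shows "L2 (\<lambda>x. cnj (f x))"
proof -
  have "cnj \<in> borel_measurable borel"
    by (intro borel_measurable_continuous_onI continuous_intros)
  then show ?thesis
    using assms measurable_compose[of f M01 borel cnj] by (simp add: L2_iff)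
qed

lemma L2_const: "L2 (\<lambda>_. c)"
  by (rule continuous_on_L2) simp

lemma set_integral_M01:
  fixes f :: "real \<Rightarrow> 'a::{banach, second_countable_topology}"
  shows "(LINT x:{0..1}|lborel. f x) = integral\<^sup>L M01 f"
  by (simp add: set_lebesgue_integral_def integral_restrict_space)

definition L2norm :: "fn \<Rightarrow> real" where
  "L2norm f = sqrt (LINT x:{0..1}|lborel. (cmod (f x))^2)"

lemma L2_Cauchy_Schwarz:
  assumes "L2 f" "L2 g"
  shows "cmod (LINT x:{0..1}|lborel. f x * g x) \<le> L2norm f * L2norm g"
proof -
  have f: "f \<in> borel_measurable M01" and g: "g \<in> borel_measurable M01"
    and f2: "integrable M01 (\<lambda>x. (cmod (f x))^2)" and g2: "integrable M01 (\<lambda>x. (cmod (g x))^2)"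
    using assms by (auto simp: L2_iff)
  have fg: "integrable M01 (\<lambda>x. cmod (f x) * cmod (g x))"
    using integrable_norm[of M01 "\<lambda>x. f x * g x"] L2_mult_integrable[OF assms]
    by (simp add: set_integrable_eq norm_mult)
  define P where "P = integral\<^sup>L M01 (\<lambda>x. cmod (f x) * cmod (g x))"
  define A where "A = integral\<^sup>L M01 (\<lambda>x. (cmod (f x))^2)"
  define B where "B = integral\<^sup>L M01 (\<lambda>x. (cmod (g x))^2)"
  have nonneg: "0 \<le> P" "0 \<le> A" "0 \<le> B" by (simp_all add: P_def A_def B_def)
  have "(\<integral>\<^sup>+x. ennreal (cmod (f x)) * ennreal (cmod (g x)) \<partial>M01)^2
          \<le> (\<integral>\<^sup>+x. ennreal (cmod (f x))^2 \<partial>M01) * (\<integral>\<^sup>+x. ennreal (cmod (g x))^2 \<partial>M01)"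
    using f g
    by (intro Cauchy_Schwarz_nn_integral measurable_compose[OF _ measurable_ennreal]
        measurable_compose[OF _ borel_measurable_norm])
  also have "(\<lambda>x. ennreal (cmod (f x)) * ennreal (cmod (g x))) = (\<lambda>x. ennreal (cmod (f x) * cmod (g x)))"
    by (simp add: ennreal_mult)
  also have "(\<lambda>x. ennreal (cmod (f x))^2) = (\<lambda>x. ennreal ((cmod (f x))^2))"
    by (simp add: ennreal_power)
  also have "(\<lambda>x. ennreal (cmod (g x))^2) = (\<lambda>x. ennreal ((cmod (g x))^2))"
    by (simp add: ennreal_power)
  finally have "ennreal P ^ 2 \<le> ennreal A * ennreal B"
    unfolding P_def A_def B_def by (simp add: nn_integral_eq_integral fg f2 g2)
  then have "P ^ 2 \<le> A * B"
    using nonneg by (simp add: ennreal_power ennreal_le_iff flip: ennreal_mult)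
  then have "P \<le> sqrt A * sqrt B"
    using real_le_rsqrt[of P "A * B"] by (simp add: real_sqrt_mult)
  moreover have "cmod (integral\<^sup>L M01 (\<lambda>x. f x * g x)) \<le> P"
    unfolding P_def using integral_norm_bound[of M01 "\<lambda>x. f x * g x"] by (simp add: norm_mult)
  ultimately show ?thesis by (simp add: set_integral_M01 A_def B_def L2norm_def)
qed

lemma set_integral_lin:
  fixes f g :: "real \<Rightarrow> complex"
  assumes "set_integrable lborel A f" "set_integrable lborel A g"
  shows "(LINT x:A|lborel. a * f x + b * g x) = a * (LINT x:A|lborel. f x) + b * (LINT x:A|lborel. g x)"
  using assms by (simp add: set_integral_add(2))

lemma set_integral_cnj: "(LINT x:A|M. cnj (f x)) = cnj (LINT x:A|M. f x)"
proof -
  have "(\<lambda>x. indicator A x *\<^sub>R cnj (f x)) = (\<lambda>x. cnj (indicator A x *\<^sub>R f x))"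
    by (simp add: fun_eq_iff)
  then show ?thesis unfolding set_lebesgue_integral_def by (simp only: Bochner_Integration.integral_cnj)
qed

lemma set_integral_cmod_sq_nonneg: "0 \<le> (LINT x:A|lborel. (cmod (f x))^2)"
  unfolding set_lebesgue_integral_def
  by (intro Bochner_Integration.integral_nonneg) (simp split: split_indicator)

section \<open>Weak derivatives\<close>

lemma is_wderiv_L2_deriv: "is_wderiv u g \<Longrightarrow> L2 g"
  unfolding is_wderiv_def by blast

lemma is_wderiv_integral:
  assumes "is_wderiv u g" "x \<in> {0..1}"
  shows "u x = u 0 + integral {0..x} g"
proof -
  have "set_integrable lborel {0..x} g"
    by (rule set_integrable_subset[OF L2_integrable[OF is_wderiv_L2_deriv[OF assms(1)]]])
      (use assms(2) in auto)
  then have "(LINT t:{0..x}|lborel. g t) = integral {0..x} g"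
    by (rule set_borel_integral_eq_integral(2))
  moreover have "u x = u 0 + (LINT t:{0..x}|lborel. g t)"
    using assms unfolding is_wderiv_def by blast
  ultimately show ?thesis by simp
qed

lemma is_wderiv_continuous:
  assumes "is_wderiv u g" shows "continuous_on {0..1} u"
proof -
  have "g integrable_on {0..1}"
    using assms by (intro set_borel_integral_eq_integral(1) L2_integrable is_wderiv_L2_deriv)
  then have "continuous_on {0..1} (\<lambda>x. u 0 + integral {0..x} g)"
    by (intro continuous_intros indefinite_integral_continuous_1)
  then show ?thesis
    by (rule continuous_on_eq) (metis is_wderiv_integral[OF assms])
qed

lemma is_wderiv_L2_fun: "is_wderiv u g \<Longrightarrow> L2 u"
  by (rule continuous_on_L2[OF is_wderiv_continuous])

lemma H1_L2: "u \<in> H1 \<Longrightarrow> L2 u"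
  by (auto simp: H1_def intro: is_wderiv_L2_fun)

lemma is_wderiv_wd: "u \<in> H1 \<Longrightarrow> is_wderiv u (wd u)"
  unfolding H1_def wd_def by (simp add: someI_ex)

lemma is_wderiv_lin:
  assumes "is_wderiv u g" "is_wderiv v h"
  shows "is_wderiv (\<lambda>x. a * u x + b * v x) (\<lambda>x. a * g x + b * h x)"
  unfolding is_wderiv_def
proof (intro conjI ballI)
  show "L2 (\<lambda>x. a * g x + b * h x)"
    using assms by (intro L2_lin is_wderiv_L2_deriv)
  fix x :: real assume x: "x \<in> {0..1}"
  have "set_integrable lborel {0..x} g" "set_integrable lborel {0..x} h"
    using x assms by (auto intro!: set_integrable_subset[OF L2_integrable[OF is_wderiv_L2_deriv]])
  then have "(LINT t:{0..x}|lborel. a * g t + b * h t)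
               = a * (LINT t:{0..x}|lborel. g t) + b * (LINT t:{0..x}|lborel. h t)"
    by (subst set_integral_add(2)) auto
  moreover have "u x = u 0 + (LINT t:{0..x}|lborel. g t)" "v x = v 0 + (LINT t:{0..x}|lborel. h t)"
    using assms x unfolding is_wderiv_def by blast+
  ultimately show "a * u x + b * v x = a * u 0 + b * v 0 + (LINT t:{0..x}|lborel. a * g t + b * h t)"
    by (simp add: algebra_simps)
qed

lemma is_wderiv_const: "is_wderiv (\<lambda>_. c) (\<lambda>_. 0)"
  by (auto simp: is_wderiv_def intro: continuous_on_L2)

lemma is_wderiv_diff_const:
  assumes "is_wderiv v g" shows "is_wderiv (\<lambda>x. v x - c) g"
  using is_wderiv_lin[OF assms is_wderiv_const[of 1], of 1 "- c"] by simp

lemma is_wderiv_primitive: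
  assumes "L2 g" shows "is_wderiv (\<lambda>x. c + (LINT t:{0..x}|lborel. g t)) g"
  using assms set_integrable_subset[OF L2_integrable[OF assms], of "{0..0}"]
  by (simp add: is_wderiv_def set_borel_integral_eq_integral(2))

lemma is_wderiv_cong:
  assumes "is_wderiv f g" "\<And>x. x \<in> {0..1} \<Longrightarrow> f x = f' x"
  shows "is_wderiv f' g"
  using assms unfolding is_wderiv_def by (metis atLeastAtMost_iff order_refl zero_le_one)

lemma H1_lin: "u \<in> H1 \<Longrightarrow> v \<in> H1 \<Longrightarrow> (\<lambda>x. a * u x + b * v x) \<in> H1"
  unfolding H1_def using is_wderiv_lin by blast

lemma H1_diff_const: "v \<in> H1 \<Longrightarrow> (\<lambda>x. v x - c) \<in> H1"
  unfolding H1_def using is_wderiv_diff_const by blast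

lemma H1_const: "(\<lambda>_. c) \<in> H1"
  unfolding H1_def using is_wderiv_const by blast

lemma H1T_const: "(\<lambda>_. c) \<in> H1T"
  by (simp add: H1T_def H1_const)

lemma C1_is_wderiv:
  assumes deriv: "\<And>x. x \<in> {0..1} \<Longrightarrow> (f has_vector_derivative f' x) (at x)"
    and cont: "continuous_on {0..1} f'"
  shows "is_wderiv f f'"
  unfolding is_wderiv_def
proof (intro conjI ballI)
  show "L2 f'" by (rule continuous_on_L2[OF cont])
  fix x :: real assume x: "x \<in> {0..1}"
  have "(LINT t:{0..x}|lborel. f' t) = f x - f 0"
    unfolding set_lebesgue_integral_def
    by (rule integral_FTC_atLeastAtMost)
      (use x in \<open>auto intro!: has_vector_derivative_at_within deriv continuous_on_subset[OF cont]\<close>)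
  then show "f x = f 0 + (LINT t:{0..x}|lborel. f' t)" by simp
qed

section \<open>Uniqueness almost everywhere\<close>

lemma primitive_zero_imp_AE_zero:
  fixes k :: "real \<Rightarrow> complex"
  assumes k: "set_integrable lborel {0..1} k"
    and zero: "\<And>x. x \<in> {0..1} \<Longrightarrow> (LINT t:{0..x}|lborel. k t) = 0"
  shows "AE x \<in> {0..1} in lborel. k x = 0"
proof -
  define f where "f x = indicator {0..1} x *\<^sub>R k x" for x
  have "f integrable_on UNIV"
    using k has_integral_integral_lborel unfolding set_integrable_def f_def integrable_on_def by blast
  then have f_ab: "f integrable_on cbox a b" for a b
    by (rule integrable_on_subcbox) simp
  obtain N where "negligible N" and N: "\<And>x e. \<lbrakk>x \<notin> N; 0 < e\<rbrakk> \<Longrightarrow>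
      \<exists>d>0. \<forall>h. 0 < h \<and> h < d \<longrightarrow> norm (integral (cbox x (x + h *\<^sub>R One)) f /\<^sub>R h ^ DIM(real) - f x) < e"
    using integrable_ccontinuous_explicit[OF f_ab] by blast
  have f_zero: "integral {0..y} f = 0" if "y \<in> {0..1}" for y
  proof -
    have "integral {0..y} f = integral {0..y} k"
      by (rule integral_cong) (use that in \<open>auto simp: f_def\<close>)
    also have "\<dots> = (LINT t:{0..y}|lborel. k t)"
      using set_borel_integral_eq_integral(2)[OF set_integrable_subset[OF k]] that by simp
    finally show ?thesis using zero[OF that] by simp
  qed
  \<comment> \<open>Lebesgue differentiation: off \<open>N\<close>, \<open>k x\<close> is the limit of averages over \<open>[x, x + h]\<close>, which vanish.\<close>
  have "k x = 0" if x: "x \<in> {0..<1}" "x \<notin> N" for x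
  proof (rule ccontr)
    assume "k x \<noteq> 0"
    then obtain d where "d > 0" and d: "\<And>h. 0 < h \<Longrightarrow> h < d \<Longrightarrow>
        norm (integral (cbox x (x + h *\<^sub>R One)) f /\<^sub>R h ^ DIM(real) - f x) < norm (k x)"
      using N[OF x(2), of "norm (k x)"] by auto
    define h where "h = min (d/2) ((1 - x)/2)"
    have "h \<le> (1 - x)/2" unfolding h_def by (rule min.cobounded2)
    then have h: "0 < h" "h < d" "x + h \<le> 1"
      using \<open>d > 0\<close> x(1) by (auto simp: h_def)
    have "integral {0..x} f + integral {x..x+h} f = integral {0..x+h} f"
      by (rule Henstock_Kurzweil_Integration.integral_combine) (use x h f_ab[of 0 "x+h"] in auto)
    then have "integral {x..x+h} f = 0"
      using f_zero[of x] f_zero[of "x+h"] h x by simp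
    with d[OF h(1,2)] x(1) show False by (simp add: f_def)
  qed
  then have "{x \<in> space lebesgue. \<not> (x \<in> {0..1} \<longrightarrow> k x = 0)} \<subseteq> insert 1 N"
    by force
  moreover have "insert 1 N \<in> null_sets lebesgue"
    using \<open>negligible N\<close> negligible_iff_null_sets by auto
  ultimately have "AE x in lebesgue. x \<in> {0..1} \<longrightarrow> k x = 0"
    by (intro AE_I'[of "insert 1 N"])
  then show ?thesis by (simp add: AE_completion_iff)
qed

lemma continuous_on_AE_eq:
  fixes f g :: "real \<Rightarrow> complex"
  assumes "continuous_on {0..1} f" "continuous_on {0..1} g"
    and ae: "AE x \<in> {0..1} in lborel. f x = g x" and x0: "x0 \<in> {0..1}"
  shows "f x0 = g x0"
proof (rule ccontr)
  assume "f x0 \<noteq> g x0"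
  have "continuous_on {0..1} (\<lambda>x. f x - g x)"
    using assms by (intro continuous_intros)
  then obtain d where "d > 0"
    and d: "\<forall>x\<in>{0..1}. dist x x0 < d \<longrightarrow> dist (f x - g x) (f x0 - g x0) < cmod (f x0 - g x0)"
    using x0 \<open>f x0 \<noteq> g x0\<close> unfolding continuous_on_iff by (meson zero_less_norm_iff right_minus_eq)
  obtain N where N: "{x \<in> space lborel. \<not> (x \<in> {0..1} \<longrightarrow> f x = g x)} \<subseteq> N"
    "emeasure lborel N = 0" "N \<in> sets lborel"
    using ae by (rule AE_E)
  define a where "a = max 0 (x0 - d/2)"
  define b where "b = min 1 (x0 + d/2)"
  have "a < b" using x0 \<open>d > 0\<close> by (auto simp: a_def b_def)
  have "{a..b} \<subseteq> N"
  proof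
    fix x assume x: "x \<in> {a..b}"
    then have "x \<in> {0..1}" "dist x x0 < d"
      using \<open>d > 0\<close> by (auto simp: a_def b_def dist_real_def)
    then have "dist (f x - g x) (f x0 - g x0) < cmod (f x0 - g x0)"
      using d by blast
    then have "f x \<noteq> g x"
      by (auto simp: dist_norm norm_minus_commute)
    then show "x \<in> N" using N(1) \<open>x \<in> {0..1}\<close> by auto
  qed
  then have "emeasure lborel {a..b} \<le> 0"
    using emeasure_mono[OF _ N(3)] N(2) by metis
  then show False using \<open>a < b\<close> by simp
qed

lemma is_wderiv_unique_AE:
  assumes "is_wderiv u g" "is_wderiv u g'"
  shows "AE x \<in> {0..1} in lborel. g x = g' x"
proof -
  have g: "set_integrable lborel {0..1} g" and g': "set_integrable lborel {0..1} g'"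
    using assms by (auto intro: L2_integrable is_wderiv_L2_deriv)
  have "AE x \<in> {0..1} in lborel. g x - g' x = 0"
  proof (rule primitive_zero_imp_AE_zero)
    show "set_integrable lborel {0..1} (\<lambda>x. g x - g' x)"
      by (rule set_integral_diff(1)[OF g g'])
    fix x :: real assume x: "x \<in> {0..1}"
    have "u x = u 0 + (LINT t:{0..x}|lborel. g t)" "u x = u 0 + (LINT t:{0..x}|lborel. g' t)"
      using assms x unfolding is_wderiv_def by blast+
    moreover have "set_integrable lborel {0..x} g" "set_integrable lborel {0..x} g'"
      using x by (auto intro: set_integrable_subset[OF g] set_integrable_subset[OF g'])
    ultimately show "(LINT t:{0..x}|lborel. g t - g' t) = 0"
      by (simp add: set_integral_diff(2))
  qed
  then show ?thesis by eventually_elim simp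
qed

lemma set_integral_cong_AE:
  fixes f f' :: "real \<Rightarrow> complex"
  assumes "set_integrable lborel A f" "set_integrable lborel A f'" "A \<subseteq> {0..1}"
    and "AE x \<in> {0..1} in lborel. f x = f' x"
  shows "(LINT x:A|lborel. f x) = (LINT x:A|lborel. f' x)"
proof -
  have "AE x in lborel. indicator A x *\<^sub>R (f x - f' x) = 0"
    using assms(4) by eventually_elim (use assms(3) in \<open>auto simp: indicator_def\<close>)
  then have "(LINT x:A|lborel. f x - f' x) = 0"
    unfolding set_lebesgue_integral_def by (rule integral_eq_zero_AE)
  then show ?thesis using set_integral_diff(2)[OF assms(1,2)] by simp
qed

lemma is_wderiv_cong_AE:
  assumes "is_wderiv u g" "L2 g'" "AE x \<in> {0..1} in lborel. g x = g' x"
  shows "is_wderiv u g'"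
  unfolding is_wderiv_def
proof (intro conjI ballI)
  fix x :: real assume x: "x \<in> {0..1}"
  have "u x = u 0 + (LINT t:{0..x}|lborel. g t)"
    using assms(1) x unfolding is_wderiv_def by blast
  also have "(LINT t:{0..x}|lborel. g t) = (LINT t:{0..x}|lborel. g' t)"
    using x assms(3)
    by (intro set_integral_cong_AE set_integrable_subset[OF L2_integrable[OF is_wderiv_L2_deriv[OF assms(1)]]]
        set_integrable_subset[OF L2_integrable[OF assms(2)]]) auto
  finally show "u x = u 0 + (LINT t:{0..x}|lborel. g' t)" .
qed fact

lemma second_wderiv_unique_AE:
  assumes "is_wderiv u u1" "is_wderiv u1 u2" "is_wderiv u u1'" "is_wderiv u1' u2'"
  shows "AE x \<in> {0..1} in lborel. u2 x = u2' x"
proof -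
  have "AE x \<in> {0..1} in lborel. u1 x = u1' x"
    by (rule is_wderiv_unique_AE[OF assms(1,3)])
  then have "u1 x = u1' x" if "x \<in> {0..1}" for x
    using continuous_on_AE_eq[OF is_wderiv_continuous[OF assms(2)] is_wderiv_continuous[OF assms(4)] _ that]
    by simp
  then have "is_wderiv u1 u2'"
    using is_wderiv_cong[OF assms(4)] by metis
  then show ?thesis by (rule is_wderiv_unique_AE[OF assms(2)])
qed

section \<open>Integration by parts and the du Bois-Reymond lemma\<close>

lemma set_integral_triangle_swap:
  fixes g h :: "real \<Rightarrow> complex"
  assumes g: "set_integrable lborel {0..1} g" and h: "set_integrable lborel {0..1} h"
  shows "(LINT x:{0..1}|lborel. g x * (LINT t:{0..x}|lborel. h t))
           = (LINT t:{0..1}|lborel. h t * (LINT x:{t..1}|lborel. g x))"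
proof -
  define G where "G = (\<lambda>x. indicator {0..1} x *\<^sub>R g x)"
  define H where "H = (\<lambda>x. indicator {0..1} x *\<^sub>R h x)"
  have iG: "integrable lborel G" and iH: "integrable lborel H"
    using g h by (simp_all add: G_def H_def set_integrable_def)
  then have [measurable]: "G \<in> borel_measurable lborel" "H \<in> borel_measurable lborel"
    by auto
  define F where "F x t = (if t \<le> x then G x * H t else 0)" for x t
  have "integrable (lborel \<Otimes>\<^sub>M lborel) (\<lambda>p. G (fst p) * H (snd p))"
  proof (rule lborel_pair.Fubini_integrable)
    show "integrable lborel (\<lambda>x. \<integral>y. norm (G (fst (x, y)) * H (snd (x, y))) \<partial>lborel)"
      using iG by (simp add: norm_mult integrable_mult_left integrable_norm)
  qed (use iH in simp_all)
  moreover have "case_prod F \<in> borel_measurable (lborel \<Otimes>\<^sub>M lborel)"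
    unfolding F_def by measurable
  ultimately have iF: "integrable (lborel \<Otimes>\<^sub>M lborel) (case_prod F)"
    by (rule Bochner_Integration.integrable_bound) (auto simp: F_def norm_mult)
  have inner_t: "(\<integral>t. F x t \<partial>lborel) = G x * (LINT t:{0..x}|lborel. h t)" for x
  proof (cases "x \<in> {0..1}")
    case True
    then have "(\<lambda>t. F x t) = (\<lambda>t. G x * (indicator {0..x} t *\<^sub>R h t))"
      by (auto simp: F_def H_def indicator_def fun_eq_iff)
    then show ?thesis by (simp only: integral_mult_right_zero set_lebesgue_integral_def)
  next
    case False
    then have "G x = 0" by (simp add: G_def)
    then have "(\<lambda>t. F x t) = (\<lambda>t. 0)" by (simp add: F_def fun_eq_iff)
    then show ?thesis using \<open>G x = 0\<close> by simp
  qed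
  have inner_x: "(\<integral>x. F x t \<partial>lborel) = H t * (LINT x:{t..1}|lborel. g x)" for t
  proof (cases "t \<in> {0..1}")
    case True
    then have "(\<lambda>x. F x t) = (\<lambda>x. H t * (indicator {t..1} x *\<^sub>R g x))"
      by (auto simp: F_def G_def indicator_def fun_eq_iff)
    then show ?thesis by (simp only: integral_mult_right_zero set_lebesgue_integral_def)
  next
    case False
    then have "H t = 0" by (simp add: H_def)
    then have "(\<lambda>x. F x t) = (\<lambda>x. 0)" by (simp add: F_def fun_eq_iff)
    then show ?thesis using \<open>H t = 0\<close> by simp
  qed
  have "(LINT x:{0..1}|lborel. g x * (LINT t:{0..x}|lborel. h t)) = (\<integral>x. (\<integral>t. F x t \<partial>lborel) \<partial>lborel)"
    unfolding inner_t set_lebesgue_integral_def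
    by (rule Bochner_Integration.integral_cong) (auto simp: G_def indicator_def)
  also have "\<dots> = (\<integral>t. (\<integral>x. F x t \<partial>lborel) \<partial>lborel)"
    by (rule lborel_pair.Fubini_integral[OF iF, symmetric])
  also have "\<dots> = (LINT t:{0..1}|lborel. h t * (LINT x:{t..1}|lborel. g x))"
    unfolding inner_x set_lebesgue_integral_def
    by (rule Bochner_Integration.integral_cong) (auto simp: H_def indicator_def)
  finally show ?thesis .
qed

lemma is_wderiv_set_integral_upper:
  assumes u: "is_wderiv u g" and t: "t \<in> {0..1}"
  shows "(LINT x:{t..1}|lborel. g x) = u 1 - u t"
proof -
  have g: "set_integrable lborel {0..1} g"
    by (rule L2_integrable[OF is_wderiv_L2_deriv[OF u]])
  have "integral {0..t} g + integral {t..1} g = integral {0..1} g"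
    by (rule Henstock_Kurzweil_Integration.integral_combine)
      (use t set_borel_integral_eq_integral(1)[OF g] in auto)
  moreover have "(LINT x:{t..1}|lborel. g x) = integral {t..1} g"
    by (rule set_borel_integral_eq_integral(2)[OF set_integrable_subset[OF g]]) (use t in auto)
  ultimately show ?thesis
    using is_wderiv_integral[OF u t] is_wderiv_integral[OF u, of 1] by (simp add: eq_diff_eq add.commute)
qed

lemma integration_by_parts:
  assumes u: "is_wderiv u g" and v: "is_wderiv v h"
  shows "(LINT x:{0..1}|lborel. g x * v x) = u 1 * v 1 - u 0 * v 0 - (LINT x:{0..1}|lborel. u x * h x)"
proof -
  have g: "set_integrable lborel {0..1} g" and h: "set_integrable lborel {0..1} h"
    using u v by (auto intro: L2_integrable is_wderiv_L2_deriv)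
  define \<Phi> where "\<Phi> x = (LINT t:{0..x}|lborel. h t)" for x
  have v_\<Phi>: "v x = v 0 + \<Phi> x" if "x \<in> {0..1}" for x
    using v that unfolding is_wderiv_def \<Phi>_def by blast
  have "L2 \<Phi>"
    using is_wderiv_primitive[OF is_wderiv_L2_deriv[OF v], of 0] unfolding \<Phi>_def
    by (auto intro: is_wderiv_L2_fun)
  then have g\<Phi>: "set_integrable lborel {0..1} (\<lambda>x. g x * \<Phi> x)"
    by (intro L2_mult_integrable is_wderiv_L2_deriv[OF u])
  have uh: "set_integrable lborel {0..1} (\<lambda>x. u x * h x)"
    using u v by (intro L2_mult_integrable is_wderiv_L2_deriv is_wderiv_L2_fun)
  have "(LINT x:{0..1}|lborel. g x * v x) = (LINT x:{0..1}|lborel. v 0 * g x + g x * \<Phi> x)"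
  proof (rule set_lebesgue_integral_cong)
    show "\<forall>x. x \<in> {0..1} \<longrightarrow> g x * v x = v 0 * g x + g x * \<Phi> x"
      using v_\<Phi> by (metis distrib_left mult.commute)
  qed simp
  also have "\<dots> = v 0 * (u 1 - u 0) + (LINT x:{0..1}|lborel. g x * \<Phi> x)"
    using g g\<Phi> is_wderiv_set_integral_upper[OF u, of 0] by (simp add: set_integral_add(2))
  also have "(LINT x:{0..1}|lborel. g x * \<Phi> x) = (LINT t:{0..1}|lborel. h t * (u 1 - u t))"
    unfolding \<Phi>_def set_integral_triangle_swap[OF g h]
    by (rule set_lebesgue_integral_cong) (auto simp: is_wderiv_set_integral_upper[OF u])
  also have "\<dots> = u 1 * (v 1 - v 0) - (LINT t:{0..1}|lborel. u t * h t)"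
    using h uh is_wderiv_set_integral_upper[OF v, of 0]
    by (simp add: right_diff_distrib set_integral_diff(2) mult.commute)
  finally show ?thesis by (simp add: algebra_simps)
qed

lemma du_Bois_Reymond:
  assumes h: "L2 h"
    and orth: "\<And>\<phi> \<phi>'. \<phi> \<in> H10 \<Longrightarrow> is_wderiv \<phi> \<phi>' \<Longrightarrow> (LINT x:{0..1}|lborel. h x * \<phi>' x) = 0"
  shows "AE x \<in> {0..1} in lborel. h x = (LINT x:{0..1}|lborel. h x)"
proof -
  define c where "c = (LINT x:{0..1}|lborel. h x)"
  define k where "k = (\<lambda>x. h x - c)"
  have k: "L2 k"
    using L2_lin[OF h L2_const[of 1], of 1 "- c"] by (simp add: k_def)
  have k_mean: "(LINT x:{0..1}|lborel. k x) = 0"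
    using set_integral_diff(2)[OF L2_integrable[OF h] L2_integrable[OF L2_const[of c]]]
    by (simp add: k_def c_def set_integral_const)
  \<comment> \<open>Test against the primitive of the conjugate of the mean-free part.\<close>
  define \<Phi> where "\<Phi> = (\<lambda>x. LINT t:{0..x}|lborel. cnj (k t))"
  have \<Phi>: "is_wderiv \<Phi> (\<lambda>x. cnj (k x))"
    using is_wderiv_primitive[OF L2_cnj[OF k], of 0] by (simp add: \<Phi>_def)
  have "\<Phi> 0 = 0"
    using set_integrable_subset[OF L2_integrable[OF L2_cnj[OF k]], of "{0..0}"]
    by (simp add: \<Phi>_def set_borel_integral_eq_integral(2))
  moreover have "\<Phi> 1 = 0"
    using k_mean by (simp add: \<Phi>_def set_integral_cnj)
  ultimately have "\<Phi> \<in> H10"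
    using \<Phi> by (auto simp: H10_def H1_def)
  have "(LINT x:{0..1}|lborel. k x * cnj (k x))
          = (LINT x:{0..1}|lborel. h x * cnj (k x)) - c * (LINT x:{0..1}|lborel. cnj (k x))"
    using L2_mult_integrable[OF h L2_cnj[OF k]] L2_integrable[OF L2_cnj[OF k]]
    by (simp add: k_def left_diff_distrib set_integral_diff(2))
  also have "\<dots> = 0"
    using orth[OF \<open>\<Phi> \<in> H10\<close> \<Phi>] k_mean by (simp add: set_integral_cnj)
  finally have "(LINT x:{0..1}|lborel. k x * cnj (k x)) = 0" .
  moreover have "(\<lambda>x. k x * cnj (k x)) = (\<lambda>x. complex_of_real ((cmod (k x))^2))"
    by (simp only: complex_norm_square)
  ultimately have "complex_of_real (LINT x:{0..1}|lborel. (cmod (k x))^2) = 0"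
    by (simp only: set_integral_complex_of_real)
  moreover have "integrable lborel (\<lambda>x. indicator {0..1} x *\<^sub>R (cmod (k x))^2)"
    using k by (simp add: L2_def set_integrable_def)
  ultimately have "AE x in lborel. indicator {0..1} x *\<^sub>R (cmod (k x))^2 = 0"
    by (simp add: set_lebesgue_integral_def integral_nonneg_eq_0_iff_AE)
  then show ?thesis
    by eventually_elim (auto simp: k_def c_def indicator_def)
qed

lemma weak_second_wderiv:
  assumes u: "u \<in> H1" and q: "L2 q"
    and weak: "\<And>\<phi> \<phi>'. \<phi> \<in> H10 \<Longrightarrow> is_wderiv \<phi> \<phi>'
                 \<Longrightarrow> (LINT x:{0..1}|lborel. wd u x * \<phi>' x) = - (LINT x:{0..1}|lborel. q x * \<phi> x)"
  shows "\<exists>u1. is_wderiv u u1 \<and> is_wderiv u1 q"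
proof -
  define Q where "Q = (\<lambda>x. LINT t:{0..x}|lborel. q t)"
  have Q: "is_wderiv Q q"
    using is_wderiv_primitive[OF q, of 0] by (simp add: Q_def)
  have "L2 (wd u)" "L2 Q"
    using is_wderiv_L2_deriv[OF is_wderiv_wd[OF u]] is_wderiv_L2_fun[OF Q] .
  then have L2_diff: "L2 (\<lambda>x. wd u x - Q x)"
    using L2_lin[of "wd u" Q 1 "-1"] by simp
  have "(LINT x:{0..1}|lborel. (wd u x - Q x) * \<phi>' x) = 0"
    if "\<phi> \<in> H10" "is_wderiv \<phi> \<phi>'" for \<phi> \<phi>'
  proof -
    have "\<phi> 0 = 0" "\<phi> 1 = 0" using that(1) by (auto simp: H10_def)
    then have "(LINT x:{0..1}|lborel. Q x * \<phi>' x) = - (LINT x:{0..1}|lborel. q x * \<phi> x)"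
      using integration_by_parts[OF Q that(2)] by simp
    then show ?thesis
      using weak[OF that] set_integral_lin[OF L2_mult_integrable[OF \<open>L2 (wd u)\<close> is_wderiv_L2_deriv[OF that(2)]]
          L2_mult_integrable[OF \<open>L2 Q\<close> is_wderiv_L2_deriv[OF that(2)]], where a=1 and b="-1"]
      by (simp add: left_diff_distrib)
  qed
  then obtain c where c: "AE x \<in> {0..1} in lborel. wd u x - Q x = c"
    using du_Bois_Reymond[OF L2_diff] by blast
  define u1 where "u1 = (\<lambda>x. c + Q x)"
  have "is_wderiv u1 q"
    using is_wderiv_primitive[OF q, of c] by (simp add: u1_def Q_def)
  moreover have "is_wderiv u u1"
    using c by (intro is_wderiv_cong_AE[OF is_wderiv_wd[OF u] is_wderiv_L2_fun[OF \<open>is_wderiv u1 q\<close>]])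
      (auto simp: u1_def elim: eventually_mono)
  ultimately show ?thesis by blast
qed

section \<open>Bounds in the \<open>H\<^sup>1\<close> norm\<close>

lemma L2norm_nonneg: "0 \<le> L2norm f"
  by (simp add: L2norm_def set_integral_cmod_sq_nonneg)

lemma H1norm_eq:
  assumes "v \<in> H1" shows "H1norm v = sqrt ((L2norm v)^2 + (L2norm (wd v))^2)"
proof -
  have "L2 v" "L2 (wd v)"
    using H1_L2[OF assms] is_wderiv_L2_deriv[OF is_wderiv_wd[OF assms]] .
  then show ?thesis
    by (simp add: H1norm_def L2norm_def L2_def set_integral_add(2) set_integral_cmod_sq_nonneg)
qed

lemma L2norm_le_H1norm: "v \<in> H1 \<Longrightarrow> L2norm v \<le> H1norm v"
  by (simp add: H1norm_eq L2norm_nonneg real_le_rsqrt)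

lemma L2norm_wd_le_H1norm: "v \<in> H1 \<Longrightarrow> L2norm (wd v) \<le> H1norm v"
  by (simp add: H1norm_eq L2norm_nonneg real_le_rsqrt)

lemma H1norm_nonneg: "v \<in> H1 \<Longrightarrow> 0 \<le> H1norm v"
  by (simp add: H1norm_eq)

lemma L2_pairing_le_H1norm:
  assumes "L2 f" "v \<in> H1"
  shows "cmod (LINT x:{0..1}|lborel. f x * v x) \<le> L2norm f * H1norm v"
    and "cmod (LINT x:{0..1}|lborel. f x * wd v x) \<le> L2norm f * H1norm v"
  using order_trans[OF L2_Cauchy_Schwarz[OF assms(1) H1_L2[OF assms(2)]]
      mult_left_mono[OF L2norm_le_H1norm[OF assms(2)] L2norm_nonneg]]
    order_trans[OF L2_Cauchy_Schwarz[OF assms(1) is_wderiv_L2_deriv[OF is_wderiv_wd[OF assms(2)]]]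
      mult_left_mono[OF L2norm_wd_le_H1norm[OF assms(2)] L2norm_nonneg]]
  by auto

lemma L2norm_le_1:
  assumes "\<And>x. x \<in> {0..1} \<Longrightarrow> cmod (f x) \<le> 1" "L2 f"
  shows "L2norm f \<le> 1"
proof -
  have "(LINT x:{0..1}|lborel. (cmod (f x))^2) \<le> (LINT x:{0..1::real}|lborel. 1)"
  proof (rule set_integral_mono)
    show "set_integrable lborel {0..1} (\<lambda>x. (cmod (f x))^2)"
      using assms(2) by (simp add: L2_def)
  qed (auto simp: assms(1) power_le_one set_integrable_def)
  then show ?thesis by (simp add: L2norm_def set_integral_const)
qed

lemma H1_value_at_0_bound:
  assumes v: "v \<in> H1" shows "cmod (v 0) \<le> 2 * H1norm v"
proof -
  have lin: "is_wderiv (\<lambda>x. complex_of_real x - 1) (\<lambda>_. 1)"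
    by (rule C1_is_wderiv) (auto intro!: derivative_eq_intros)
  have "(LINT x:{0..1}|lborel. 1 * v x) = v 0 - (LINT x:{0..1}|lborel. (complex_of_real x - 1) * wd v x)"
    using integration_by_parts[OF lin is_wderiv_wd[OF v]] by simp
  then have "cmod (v 0) \<le> cmod (LINT x:{0..1}|lborel. 1 * v x)
                            + cmod (LINT x:{0..1}|lborel. (complex_of_real x - 1) * wd v x)"
    using norm_triangle_ineq[of "LINT x:{0..1}|lborel. 1 * v x"
        "LINT x:{0..1}|lborel. (complex_of_real x - 1) * wd v x"] by simp
  also have "\<dots> \<le> L2norm (\<lambda>_. 1) * H1norm v + L2norm (\<lambda>x. complex_of_real x - 1) * H1norm v"
    using v is_wderiv_L2_fun[OF lin] L2_const
    by (intro add_mono L2_pairing_le_H1norm)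
  also have "\<dots> \<le> 1 * H1norm v + 1 * H1norm v"
    using v is_wderiv_L2_fun[OF lin] L2_const
    by (intro add_mono mult_right_mono L2norm_le_1) (auto simp: H1norm_nonneg cmod_def)
  finally show ?thesis by simp
qed

section \<open>The operator \<open>A\<^sub>Y\<close>\<close>

definition weight :: "nat \<Rightarrow> fn" where
  "weight k x = complex_of_real ((1 - x) ^ k)"

lemma mu_eq_weight: "mu k f = (LINT x:{0..1}|lborel. weight k x * f x)"
  unfolding mu_def weight_def ..

lemma weight_H1: "weight k \<in> H1"
proof -
  have "((\<lambda>x. complex_of_real ((1 - x) ^ k))
          has_vector_derivative complex_of_real (- (real k * (1 - x) ^ (k - 1)))) (at x)" for x
    by (intro has_vector_derivative_of_real) (auto intro!: derivative_eq_intros)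
  then have "is_wderiv (weight k) (\<lambda>x. complex_of_real (- (real k * (1 - x) ^ (k - 1))))"
    unfolding weight_def by (intro C1_is_wderiv continuous_intros)
  then show ?thesis by (auto simp: H1_def)
qed

lemma weight_L2: "L2 (weight k)"
  by (rule H1_L2[OF weight_H1])

lemma gU_eq_wderiv:
  assumes "is_wderiv u u1" "is_wderiv \<phi> \<phi>1"
  shows "gU n u \<phi> = (LINT x:{0..1}|lborel. u1 x * \<phi>1 x)
                      + gamma n u * (LINT x:{0..1}|lborel. weight (n - 2) x * \<phi> x)"
proof -
  have u: "u \<in> H1" and \<phi>: "\<phi> \<in> H1" using assms by (auto simp: H1_def)
  have "AE x \<in> {0..1} in lborel. wd u x * wd \<phi> x = u1 x * \<phi>1 x"
    using is_wderiv_unique_AE[OF is_wderiv_wd[OF u] assms(1)]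
      is_wderiv_unique_AE[OF is_wderiv_wd[OF \<phi>] assms(2)]
    by eventually_elim auto
  moreover have "L2 (wd u)" "L2 (wd \<phi>)" "L2 u1" "L2 \<phi>1"
    using u \<phi> assms by (auto intro: is_wderiv_L2_deriv is_wderiv_wd)
  ultimately have "(LINT x:{0..1}|lborel. wd u x * wd \<phi> x) = (LINT x:{0..1}|lborel. u1 x * \<phi>1 x)"
    by (intro set_integral_cong_AE L2_mult_integrable) auto
  then show ?thesis by (simp add: gU_def weight_def)
qed

lemma gU_lin:
  assumes u: "u \<in> H1" and \<phi>: "\<phi> \<in> H1" and \<psi>: "\<psi> \<in> H1"
  shows "gU n u (\<lambda>x. a * \<phi> x + b * \<psi> x) = a * gU n u \<phi> + b * gU n u \<psi>"
proof -
  note d = is_wderiv_wd[OF u] is_wderiv_wd[OF \<phi>] is_wderiv_wd[OF \<psi>]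
  have "(LINT x:{0..1}|lborel. wd u x * (a * wd \<phi> x + b * wd \<psi> x))
          = a * (LINT x:{0..1}|lborel. wd u x * wd \<phi> x) + b * (LINT x:{0..1}|lborel. wd u x * wd \<psi> x)"
    using set_integral_lin[OF L2_mult_integrable L2_mult_integrable, of "wd u" "wd \<phi>" "wd u" "wd \<psi>" a b] d
    by (simp add: is_wderiv_L2_deriv algebra_simps)
  moreover have "(LINT x:{0..1}|lborel. weight (n-2) x * (a * \<phi> x + b * \<psi> x))
          = a * (LINT x:{0..1}|lborel. weight (n-2) x * \<phi> x) + b * (LINT x:{0..1}|lborel. weight (n-2) x * \<psi> x)"
    using set_integral_lin[OF L2_mult_integrable L2_mult_integrable,
        of "weight (n-2)" \<phi> "weight (n-2)" \<psi> a b] \<phi> \<psi>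
    by (simp add: weight_L2 H1_L2 algebra_simps)
  ultimately show ?thesis
    using gU_eq_wderiv[OF d(1) is_wderiv_lin[OF d(2,3)], of n a b]
      gU_eq_wderiv[OF d(1) d(2), of n] gU_eq_wderiv[OF d(1) d(3), of n]
    by (simp add: algebra_simps)
qed

definition gU_ext :: "nat \<Rightarrow> fn \<Rightarrow> functional" where
  "gU_ext n u v = (if v \<in> H1T then gU n u (\<lambda>x. v x - v 0) else 0)"

lemma gU_shift:
  assumes u: "u \<in> H1" and v: "v \<in> H1"
  shows "gU n u (\<lambda>x. v x - v 0) = (LINT x:{0..1}|lborel. wd u x * wd v x)
     + gamma n u * ((LINT x:{0..1}|lborel. weight (n-2) x * v x) - v 0 * (LINT x:{0..1}|lborel. weight (n-2) x))"
proof -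
  have "(LINT x:{0..1}|lborel. weight (n-2) x * (v x - v 0))
          = (LINT x:{0..1}|lborel. 1 * (weight (n-2) x * v x) + (- v 0) * weight (n-2) x)"
    by (simp add: algebra_simps)
  also have "\<dots> = (LINT x:{0..1}|lborel. weight (n-2) x * v x) - v 0 * (LINT x:{0..1}|lborel. weight (n-2) x)"
    using v by (simp add: set_integral_lin L2_mult_integrable L2_integrable weight_L2 H1_L2)
  finally show ?thesis
    using gU_eq_wderiv[OF is_wderiv_wd[OF u] is_wderiv_diff_const[OF is_wderiv_wd[OF v]], of n "v 0"]
    by simp
qed

lemma gU_ext_bounded:
  assumes u: "u \<in> H1"
  shows "\<exists>C. \<forall>v\<in>H1T. cmod (gU_ext n u v) \<le> C * H1norm v"
proof (intro exI ballI)
  fix v assume "v \<in> H1T"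
  then have v: "v \<in> H1" by (simp add: H1T_def)
  define A where "A = (LINT x:{0..1}|lborel. wd u x * wd v x)"
  define B where "B = (LINT x:{0..1}|lborel. weight (n-2) x * v x)"
  define I where "I = (LINT x:{0..1}|lborel. weight (n-2) x)"
  have "cmod A \<le> L2norm (wd u) * H1norm v"
    unfolding A_def by (rule L2_pairing_le_H1norm(2)[OF is_wderiv_L2_deriv[OF is_wderiv_wd[OF u]] v])
  moreover have "cmod B + cmod (v 0) * cmod I \<le> L2norm (weight (n-2)) * H1norm v + 2 * H1norm v * cmod I"
    unfolding B_def using L2_pairing_le_H1norm(1)[OF weight_L2 v] H1_value_at_0_bound[OF v]
    by (intro add_mono mult_right_mono) auto
  moreover have "cmod (B - v 0 * I) \<le> cmod B + cmod (v 0) * cmod I"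
    using norm_triangle_ineq4[of B "v 0 * I"] by (simp add: norm_mult)
  ultimately have "cmod A + cmod (gamma n u) * cmod (B - v 0 * I)
      \<le> L2norm (wd u) * H1norm v
          + cmod (gamma n u) * (L2norm (weight (n-2)) * H1norm v + 2 * H1norm v * cmod I)"
    by (intro add_mono mult_left_mono) auto
  moreover have "cmod (gU_ext n u v) \<le> cmod A + cmod (gamma n u) * cmod (B - v 0 * I)"
    using \<open>v \<in> H1T\<close> norm_triangle_ineq[of A "gamma n u * (B - v 0 * I)"]
    by (simp add: gU_ext_def gU_shift[OF u v] A_def B_def I_def norm_mult)
  ultimately have "cmod (gU_ext n u v)
      \<le> L2norm (wd u) * H1norm v
          + cmod (gamma n u) * (L2norm (weight (n-2)) * H1norm v + 2 * H1norm v * cmod I)"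
    by linarith
  also have "\<dots> = (L2norm (wd u) + cmod (gamma n u) * (L2norm (weight (n-2)) + 2 * cmod I)) * H1norm v"
    by (simp add: algebra_simps)
  finally show "cmod (gU_ext n u v)
      \<le> (L2norm (wd u) + cmod (gamma n u) * (L2norm (weight (n-2)) + 2 * cmod I)) * H1norm v" .
qed

lemma gU_ext_Hm1T:
  assumes u: "u \<in> H1" shows "gU_ext n u \<in> Hm1T"
  unfolding Hm1T_def
proof (intro CollectI conjI allI impI ballI)
  show "\<exists>C. \<forall>v\<in>H1T. cmod (gU_ext n u v) \<le> C * H1norm v"
    by (rule gU_ext_bounded[OF u])
next
  fix v w a b assume v: "v \<in> H1T" and w: "w \<in> H1T"
  then have "v \<in> H1" "w \<in> H1" by (auto simp: H1T_def)
  moreover have "(\<lambda>x. a * v x + b * w x) \<in> H1T"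
    using v w H1_lin[OF \<open>v \<in> H1\<close> \<open>w \<in> H1\<close>] by (auto simp: H1T_def)
  moreover have "(\<lambda>x. a * v x + b * w x - (a * v 0 + b * w 0)) = (\<lambda>x. a * (v x - v 0) + b * (w x - w 0))"
    by (simp add: fun_eq_iff algebra_simps)
  ultimately show "gU_ext n u (\<lambda>x. a * v x + b * w x) = a * gU_ext n u v + b * gU_ext n u w"
    using v w gU_lin[OF u H1_diff_const H1_diff_const] by (simp add: gU_ext_def)
qed (simp add: gU_ext_def)

lemma gU_const_zero: "u \<in> H1 \<Longrightarrow> gU n u (\<lambda>_. 0) = 0"
  using gU_eq_wderiv[OF is_wderiv_wd is_wderiv_const, of u n 0] by simp

lemma Idm_inv_gU:
  assumes u: "u \<in> H1" shows "Idm_inv (gU n u) = gU_ext n u"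
  unfolding Idm_inv_def
proof (rule the_equality)
  show "gU_ext n u \<in> Hm1T \<and> mu0H (gU_ext n u) = 0 \<and> (\<forall>\<phi>\<in>H10. gU_ext n u \<phi> = gU n u \<phi>)"
    using gU_ext_Hm1T[OF u] gU_const_zero[OF u] H1T_const[of 1]
    by (auto simp: mu0H_def gU_ext_def H10_def H1T_def)
next
  fix w assume w: "w \<in> Hm1T \<and> mu0H w = 0 \<and> (\<forall>\<phi>\<in>H10. w \<phi> = gU n u \<phi>)"
  show "w = gU_ext n u"
  proof
    fix v
    show "w v = gU_ext n u v"
    proof (cases "v \<in> H1T")
      case True
      then have "v \<in> H1" "v 0 = v 1" by (auto simp: H1T_def)
      define \<phi> where "\<phi> = (\<lambda>x. v x - v 0)"
      have "\<phi> \<in> H10" "\<phi> \<in> H1T"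
        using H1_diff_const[OF \<open>v \<in> H1\<close>] \<open>v 0 = v 1\<close> by (auto simp: \<phi>_def H10_def H1T_def)
      \<comment> \<open>\<open>w\<close> is linear and vanishes on constants, so \<open>w v = w (v - v 0)\<close>\<close>
      have "\<forall>v\<in>H1T. \<forall>v'\<in>H1T. \<forall>a b. w (\<lambda>x. a * v x + b * v' x) = a * w v + b * w v'"
        using w by (simp add: Hm1T_def)
      then have "w (\<lambda>x. 1 * \<phi> x + v 0 * 1) = 1 * w \<phi> + v 0 * w (\<lambda>_. 1)"
        using \<open>\<phi> \<in> H1T\<close> H1T_const[of 1] by fastforce
      moreover have "(\<lambda>x. 1 * \<phi> x + v 0 * 1) = v" by (simp add: \<phi>_def)
      ultimately have "w v = w \<phi>" using w by (simp add: mu0H_def)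
      then show ?thesis
        using w \<open>\<phi> \<in> H10\<close> True by (simp add: gU_ext_def \<phi>_def)
    next
      case False
      then show ?thesis using w by (simp add: Hm1T_def gU_ext_def)
    qed
  qed
qed

lemma A_Y_weak_form:
  fixes n :: nat
  assumes u1: "is_wderiv u u1" and u2: "is_wderiv u1 u2" and v: "v \<in> H1T"
  defines "f \<equiv> \<lambda>x. - u2 x + gamma n u * weight (n-2) x"
  shows "A_Y n y u v = (LINT x:{0..1}|lborel. f x * v x) - ((LINT x:{0..1}|lborel. f x) + cY y u) * v 1"
proof -
  have u: "u \<in> H1" using u1 by (auto simp: H1_def)
  have "v \<in> H1" and v01: "v 0 = v 1" using v by (auto simp: H1T_def)
  define \<phi> where "\<phi> = (\<lambda>x. v x - v 0)"
  have \<phi>: "is_wderiv \<phi> (wd v)"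
    unfolding \<phi>_def by (rule is_wderiv_diff_const[OF is_wderiv_wd[OF \<open>v \<in> H1\<close>]])
  have "L2 f" "L2 \<phi>"
    using L2_lin[OF is_wderiv_L2_deriv[OF u2] weight_L2, of "-1" "gamma n u" "n-2"]
      is_wderiv_L2_fun[OF \<phi>] by (simp_all add: f_def)
  \<comment> \<open>integrate the first-order term by parts; the boundary terms vanish since \<open>\<phi> 0 = \<phi> 1 = 0\<close>\<close>
  have "gU n u \<phi> = - (LINT x:{0..1}|lborel. u2 x * \<phi> x)
                    + gamma n u * (LINT x:{0..1}|lborel. weight (n-2) x * \<phi> x)"
    using gU_eq_wderiv[OF u1 \<phi>] integration_by_parts[OF u2 \<phi>] v01 by (simp add: \<phi>_def)
  also have "\<dots> = (LINT x:{0..1}|lborel. f x * \<phi> x)"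
    using set_integral_lin[OF L2_mult_integrable[OF is_wderiv_L2_deriv[OF u2] \<open>L2 \<phi>\<close>]
        L2_mult_integrable[OF weight_L2 \<open>L2 \<phi>\<close>], of "-1" "gamma n u"]
    by (simp add: f_def algebra_simps)
  also have "\<dots> = (LINT x:{0..1}|lborel. 1 * (f x * v x) + (- v 0) * f x)"
    by (simp add: \<phi>_def algebra_simps)
  also have "\<dots> = (LINT x:{0..1}|lborel. f x * v x) - v 0 * (LINT x:{0..1}|lborel. f x)"
    using set_integral_lin[OF L2_mult_integrable[OF \<open>L2 f\<close> H1_L2[OF \<open>v \<in> H1\<close>]] L2_integrable[OF \<open>L2 f\<close>],
        where a=1 and b="- v 0"]
    by simp
  finally show ?thesis
    using v v01 by (simp add: A_Y_def Idm_inv_gU[OF u] gU_ext_def delta1_def \<phi>_def algebra_simps)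
qed

lemma A_Y_H10: "u \<in> H1 \<Longrightarrow> \<phi> \<in> H10 \<Longrightarrow> A_Y n y u \<phi> = gU n u \<phi>"
  by (simp add: A_Y_def Idm_inv_gU gU_ext_def delta1_def H10_def H1T_def)

lemma mu_cong_AE:
  assumes "L2 f" "L2 g" "AE x \<in> {0..1} in lborel. f x = g x"
  shows "mu k f = mu k g"
  unfolding mu_eq_weight
  using assms by (intro set_integral_cong_AE L2_mult_integrable weight_L2) (auto elim: eventually_mono)

lemma mu_second_wderiv_indep:
  assumes "is_wderiv u u1" "is_wderiv u1 u2" "is_wderiv u u1'" "is_wderiv u1' u2'"
  shows "mu k (\<lambda>x. u2 x - c * weight j x) = mu k (\<lambda>x. u2' x - c * weight j x)"
proof (rule mu_cong_AE)
  show "L2 (\<lambda>x. u2 x - c * weight j x)" "L2 (\<lambda>x. u2' x - c * weight j x)"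
    using L2_lin[OF is_wderiv_L2_deriv[OF assms(2)] weight_L2, of 1 "-c" j]
      L2_lin[OF is_wderiv_L2_deriv[OF assms(4)] weight_L2, of 1 "-c" j] by simp_all
  show "AE x \<in> {0..1} in lborel. u2 x - c * weight j x = u2' x - c * weight j x"
    using second_wderiv_unique_AE[OF assms] by eventually_elim simp
qed

lemma mu_uminus: "mu k (\<lambda>x. - f x) = - mu k f"
  by (simp add: mu_def set_lebesgue_integral_def)

lemma mu_0: "mu 0 f = (LINT x:{0..1}|lborel. f x)"
  by (simp add: mu_def)

definition D_AY2_char :: "nat \<Rightarrow> complex \<Rightarrow> fn set" where
  "D_AY2_char n y = {u \<in> H3. \<exists>u1 u2. is_wderiv u u1 \<and> is_wderiv u1 u2 \<and>
      mu n u = y * mu 0 u \<and>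
      mu n (\<lambda>x. u2 x - gamma n u * weight (n - 2) x) = y * mu 0 (\<lambda>x. u2 x - gamma n u * weight (n - 2) x) \<and>
      mu 0 (\<lambda>x. u2 x - gamma n u * weight (n - 2) x) = (u 1 - u 0) * cnj y - u 1}"

lemma A_Y_represented_imp_wderiv:
  assumes u: "u \<in> H1" and w: "w \<in> H1" and Aw: "\<And>v. v \<in> H1T \<Longrightarrow> A_Y n y u v = emb w v"
  shows "\<exists>u1. is_wderiv u u1 \<and> is_wderiv u1 (\<lambda>x. gamma n u * weight (n-2) x - w x)"
proof (rule weak_second_wderiv[OF u])
  show "L2 (\<lambda>x. gamma n u * weight (n-2) x - w x)"
    using L2_lin[OF weight_L2 H1_L2[OF w], of "gamma n u" "n-2" "-1"] by simp
  fix \<phi> \<phi>' assume \<phi>: "\<phi> \<in> H10" "is_wderiv \<phi> \<phi>'"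
  have "\<phi> \<in> H1" using \<phi>(1) by (simp add: H10_def)
  have "gU n u \<phi> = (LINT x:{0..1}|lborel. w x * \<phi> x)"
    using Aw[of \<phi>] A_Y_H10[OF u \<phi>(1)] \<phi>(1) by (simp add: emb_def H10_def H1T_def)
  then have "(LINT x:{0..1}|lborel. wd u x * \<phi>' x)
      + gamma n u * (LINT x:{0..1}|lborel. weight (n-2) x * \<phi> x) = (LINT x:{0..1}|lborel. w x * \<phi> x)"
    using gU_eq_wderiv[OF is_wderiv_wd[OF u] \<phi>(2), of n] by simp
  moreover have "(LINT x:{0..1}|lborel. (gamma n u * weight (n-2) x - w x) * \<phi> x)
      = gamma n u * (LINT x:{0..1}|lborel. weight (n-2) x * \<phi> x) + (-1) * (LINT x:{0..1}|lborel. w x * \<phi> x)"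
    using set_integral_lin[OF L2_mult_integrable[OF weight_L2 H1_L2[OF \<open>\<phi> \<in> H1\<close>]]
        L2_mult_integrable[OF H1_L2[OF w] H1_L2[OF \<open>\<phi> \<in> H1\<close>]], where a="gamma n u" and b="-1"]
    by (simp add: algebra_simps)
  ultimately show "(LINT x:{0..1}|lborel. wd u x * \<phi>' x)
      = - (LINT x:{0..1}|lborel. (gamma n u * weight (n-2) x - w x) * \<phi> x)"
    by (simp add: eq_diff_eq[symmetric])
qed

lemma D_AY2_subset_char: "D_AY2 n y \<subseteq> D_AY2_char n y"
proof
  fix u assume "u \<in> D_AY2 n y"
  then have u: "u \<in> H1" and mu_u: "mu n u = y * mu 0 u"
    and "\<exists>w \<in> D_AY n y. \<forall>v \<in> H1T. A_Y n y u v = emb w v"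
    by (auto simp: D_AY2_def D_AY_def)
  then obtain w where w: "w \<in> H1" "mu n w = y * mu 0 w" and Aw: "\<And>v. v \<in> H1T \<Longrightarrow> A_Y n y u v = emb w v"
    by (auto simp: D_AY_def)
  define q where "q = (\<lambda>x. gamma n u * weight (n-2) x - w x)"
  have q: "q \<in> H1"
    using H1_lin[OF weight_H1 w(1), of "gamma n u" "n-2" "-1"] by (simp add: q_def)
  obtain u1 where u1: "is_wderiv u u1" "is_wderiv u1 q"
    using A_Y_represented_imp_wderiv[OF u w(1) Aw] by (auto simp: q_def)
  have q_w: "(\<lambda>x. q x - gamma n u * weight (n-2) x) = (\<lambda>x. - w x)"
    by (simp add: q_def)
  \<comment> \<open>testing with \<open>v = 1\<close> identifies the mean of \<open>w\<close>\<close>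
  have "A_Y n y u (\<lambda>_. 1) = - cY y u"
    using A_Y_weak_form[OF u1 H1T_const[of 1], of n y] by (simp add: q_def)
  then have "(LINT x:{0..1}|lborel. w x) = - cY y u"
    using Aw[OF H1T_const[of 1]] by (simp add: emb_def)
  then have "mu 0 (\<lambda>x. q x - gamma n u * weight (n-2) x) = (u 1 - u 0) * cnj y - u 1"
    by (simp add: q_w mu_uminus mu_0 cY_def algebra_simps)
  moreover have "mu n (\<lambda>x. q x - gamma n u * weight (n-2) x) = y * mu 0 (\<lambda>x. q x - gamma n u * weight (n-2) x)"
    by (simp add: q_w mu_uminus w(2))
  ultimately show "u \<in> D_AY2_char n y"
    unfolding D_AY2_char_def H3_def using u1 q mu_u by blast
qed

lemma A_Y_on_char:
  assumes "u \<in> D_AY2_char n y" "is_wderiv u u1" "is_wderiv u1 u2" "v \<in> H1T"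
  shows "A_Y n y u v = emb (\<lambda>x. - u2 x + gamma n u * weight (n - 2) x) v"
proof -
  obtain U1 U2 where U: "is_wderiv u U1" "is_wderiv U1 U2"
    and mean: "mu 0 (\<lambda>x. U2 x - gamma n u * weight (n-2) x) = (u 1 - u 0) * cnj y - u 1"
    using assms(1) by (auto simp: D_AY2_char_def)
  have "(LINT x:{0..1}|lborel. - u2 x + gamma n u * weight (n-2) x) = - mu 0 (\<lambda>x. u2 x - gamma n u * weight (n-2) x)"
    using mu_uminus[of 0 "\<lambda>x. u2 x - gamma n u * weight (n-2) x"] by (simp add: mu_0)
  also have "\<dots> = - cY y u"
    using mean mu_second_wderiv_indep[OF U assms(2,3), of 0 "gamma n u" "n-2"]
    by (simp add: cY_def algebra_simps)
  finally show ?thesis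
    using A_Y_weak_form[OF assms(2-4), of n y] by (simp add: emb_def)
qed

lemma char_subset_D_AY2: "D_AY2_char n y \<subseteq> D_AY2 n y"
proof
  fix u assume u: "u \<in> D_AY2_char n y"
  then obtain U1 U2 where U: "is_wderiv u U1" "is_wderiv U1 U2" "U2 \<in> H1"
    by (auto simp: D_AY2_char_def H3_def)
  obtain u1 u2 where u12: "is_wderiv u u1" "is_wderiv u1 u2" and mu_u: "mu n u = y * mu 0 u"
    and mu_u2: "mu n (\<lambda>x. u2 x - gamma n u * weight (n-2) x) = y * mu 0 (\<lambda>x. u2 x - gamma n u * weight (n-2) x)"
    using u by (auto simp: D_AY2_char_def)
  define w where "w = (\<lambda>x. - U2 x + gamma n u * weight (n-2) x)"
  have "w \<in> H1"
    using H1_lin[OF U(3) weight_H1, of "-1" "gamma n u" "n-2"] by (simp add: w_def)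
  moreover have "mu k w = - mu k (\<lambda>x. u2 x - gamma n u * weight (n-2) x)" for k
    using mu_second_wderiv_indep[OF U(1,2) u12, of k "gamma n u" "n-2"]
      mu_uminus[of k "\<lambda>x. U2 x - gamma n u * weight (n-2) x"]
    by (simp add: w_def)
  ultimately have "w \<in> D_AY n y"
    using mu_u2 by (simp add: D_AY_def)
  moreover have "\<forall>v \<in> H1T. A_Y n y u v = emb w v"
    using A_Y_on_char[OF u U(1,2)] by (simp add: w_def)
  moreover have "u \<in> D_AY n y"
    using U(1) mu_u by (auto simp: D_AY_def H1_def)
  ultimately show "u \<in> D_AY2 n y"
    by (auto simp: D_AY2_def)
qed

theorem mainTheorem15:
  fixes n :: nat and y :: complex
  assumes "n \<ge> 2"
  shows "D_AY2 n y = {u. u \<in> H3 \<and> (\<exists>u1 u2. is_wderiv u u1 \<and> is_wderiv u1 u2 \<and>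
            mu n u = y * mu 0 u \<and>
            mu n (\<lambda>x. u2 x - gamma n u * of_real ((1 - x) ^ (n - 2)))
              = y * mu 0 (\<lambda>x. u2 x - gamma n u * of_real ((1 - x) ^ (n - 2))) \<and>
            mu 0 (\<lambda>x. u2 x - gamma n u * of_real ((1 - x) ^ (n - 2)))
              = (u 1 - u 0) * cnj y - u 1)} \<and>
         (\<forall>u \<in> D_AY2 n y. \<forall>u1 u2. is_wderiv u u1 \<and> is_wderiv u1 u2 \<longrightarrow>
            (\<forall>v \<in> H1T. A_Y n y u v
               = emb (\<lambda>x. - u2 x + gamma n u * of_real ((1 - x) ^ (n - 2))) v))"
proof -
  have "D_AY2 n y = D_AY2_char n y"
    using D_AY2_subset_char char_subset_D_AY2 by blast
  moreover have "\<forall>u \<in> D_AY2 n y. \<forall>u1 u2. is_wderiv u u1 \<and> is_wderiv u1 u2 \<longrightarrow>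
      (\<forall>v \<in> H1T. A_Y n y u v = emb (\<lambda>x. - u2 x + gamma n u * weight (n - 2) x) v)"
    using A_Y_on_char D_AY2_subset_char by blast
  ultimately show ?thesis
    unfolding D_AY2_char_def weight_def by simp
qed

end
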